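(* The critical cardinalities of $\mathrm{Split}(B_\Omega,B_\Lambda)$, $\mathrm{Split}(\Omega,\Lambda)$ and $\mathrm{Split}(C_\Omega,C_\Lambda)$ are all equal to $\mathfrak u$; that is, for each of these three properties, $\mathfrak u$ is the minimal cardinality of a set of reals not satisfying it.
   Context: A set of reals is an infinite topological space homeomorphic to a subset of $\mathbb R$. A cover of a space $X$ is a family $\mathcal U$ of subsets of $X$ with $\bigcup\mathcal U=X$ such that $X\not\subseteq U$ for every $U\in\mathcal U$. A cover is a large cover if every $x\in X$ lies in infinitely many members; an $\omega$-cover if every finite subset of $X$ is contained in some member. $\Lambda,\Omega$ denote the collections of open large covers and open $\omega$-covers of $X$; $B_\Lambda,B_\Omega$ the collections of countable such covers by Borel sets; $C_\Lambda,C_\Omega$ the collections of countable such covers by clopen sets. $X$ satisfies $\mathrm{Split}(\mathfrak U,\mathfrak V)$ if every $\mathcal U\in\mathfrak U$ can be partitioned into two disjoint subfamilies each containing a subfamily belonging to $\mathfrak V$. $\mathfrak u$ is the minimal cardinality of a family $B$ of infinite subsets of $\mathbb N$ which is a base for a nonprincipal ultrafilter $U$ on $\mathbb N$, i.e. $U=\{a\subseteq\mathbb N: \exists b\in B\ (b\setminus a \text{ finite})\}$. *)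

theory Defs
  imports "HOL-Analysis.Analysis"
begin

text \<open>Sets of reals are taken to be infinite subsets X of the real line with the
subspace topology (all notions below are topological invariants).\<close>

definition is_cover :: "real set \<Rightarrow> real set set \<Rightarrow> bool" where
  "is_cover X \<U> \<longleftrightarrow> (\<forall>U\<in>\<U>. U \<subseteq> X) \<and> \<Union>\<U> = X \<and> (\<forall>U\<in>\<U>. \<not> X \<subseteq> U)"

definition large_cover :: "real set \<Rightarrow> real set set \<Rightarrow> bool" where
  "large_cover X \<U> \<longleftrightarrow> is_cover X \<U> \<and> (\<forall>x\<in>X. infinite {U\<in>\<U>. x \<in> U})"

definition omega_cover :: "real set \<Rightarrow> real set set \<Rightarrow> bool" where
  "omega_cover X \<U> \<longleftrightarrow> is_cover X \<U> \<and> (\<forall>F. finite F \<and> F \<subseteq> X \<longrightarrow> (\<exists>U\<in>\<U>. F \<subseteq> U))"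

text \<open>Borel sets of X: members of
the Borel sigma-algebra of the subspace X, i.e. traces on X of Borel subsets of the reals.\<close>

definition open_fam :: "real set \<Rightarrow> real set set \<Rightarrow> bool" where
  "open_fam X \<U> \<longleftrightarrow> (\<forall>U\<in>\<U>. openin (top_of_set X) U)"

definition borel_fam :: "real set \<Rightarrow> real set set \<Rightarrow> bool" where
  "borel_fam X \<U> \<longleftrightarrow> (\<forall>U\<in>\<U>. U \<in> sets (restrict_space borel X))"

definition clopen_fam :: "real set \<Rightarrow> real set set \<Rightarrow> bool" where
  "clopen_fam X \<U> \<longleftrightarrow> (\<forall>U\<in>\<U>. openin (top_of_set X) U \<and> closedin (top_of_set X) U)"

definition Lambda_covers :: "real set \<Rightarrow> real set set \<Rightarrow> bool" where
  "Lambda_covers X \<U> \<longleftrightarrow> large_cover X \<U> \<and> open_fam X \<U>"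

definition Omega_covers :: "real set \<Rightarrow> real set set \<Rightarrow> bool" where
  "Omega_covers X \<U> \<longleftrightarrow> omega_cover X \<U> \<and> open_fam X \<U>"

definition B_Lambda :: "real set \<Rightarrow> real set set \<Rightarrow> bool" where
  "B_Lambda X \<U> \<longleftrightarrow> large_cover X \<U> \<and> countable \<U> \<and> borel_fam X \<U>"

definition B_Omega :: "real set \<Rightarrow> real set set \<Rightarrow> bool" where
  "B_Omega X \<U> \<longleftrightarrow> omega_cover X \<U> \<and> countable \<U> \<and> borel_fam X \<U>"

definition C_Lambda :: "real set \<Rightarrow> real set set \<Rightarrow> bool" where
  "C_Lambda X \<U> \<longleftrightarrow> large_cover X \<U> \<and> countable \<U> \<and> clopen_fam X \<U>"

definition C_Omega :: "real set \<Rightarrow> real set set \<Rightarrow> bool" where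
  "C_Omega X \<U> \<longleftrightarrow> omega_cover X \<U> \<and> countable \<U> \<and> clopen_fam X \<U>"

definition Split ::
  "(real set \<Rightarrow> real set set \<Rightarrow> bool) \<Rightarrow> (real set \<Rightarrow> real set set \<Rightarrow> bool) \<Rightarrow> real set \<Rightarrow> bool" where
  "Split \<UU> \<VV> X \<longleftrightarrow> (\<forall>\<U>. \<UU> X \<U> \<longrightarrow>
      (\<exists>\<A> \<B>. \<A> \<union> \<B> = \<U> \<and> \<A> \<inter> \<B> = {} \<and>
              (\<exists>\<A>'\<subseteq>\<A>. \<VV> X \<A>') \<and> (\<exists>\<B>'\<subseteq>\<B>. \<VV> X \<B>')))"

definition nonprincipal_ultrafilter :: "nat set set \<Rightarrow> bool" where
  "nonprincipal_ultrafilter U \<longleftrightarrow>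
     {} \<notin> U \<and> UNIV \<in> U \<and>
     (\<forall>a b. a \<in> U \<and> a \<subseteq> b \<longrightarrow> b \<in> U) \<and>
     (\<forall>a b. a \<in> U \<and> b \<in> U \<longrightarrow> a \<inter> b \<in> U) \<and>
     (\<forall>a. a \<in> U \<or> - a \<in> U) \<and>
     (\<forall>n. {n} \<notin> U)"

definition ultrafilter_base :: "nat set set \<Rightarrow> bool" where
  "ultrafilter_base B \<longleftrightarrow> (\<forall>b\<in>B. infinite b) \<and>
     nonprincipal_ultrafilter {a. \<exists>b\<in>B. finite (b - a)}"

text \<open>B has cardinality \<mathfrak>u: a base of a nonprincipal ultrafilter of minimal cardinality.\<close>
definition u_witness :: "nat set set \<Rightarrow> bool" where
  "u_witness B \<longleftrightarrow> ultrafilter_base B \<and> (\<forall>B'. ultrafilter_base B' \<longrightarrow> (card_of B, card_of B') \<in> ordLeq)"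

definition critical_card_is_u :: "(real set \<Rightarrow> bool) \<Rightarrow> bool" where
  "critical_card_is_u P \<longleftrightarrow> (\<exists>B. u_witness B \<and>
      (\<exists>X. infinite X \<and> \<not> P X \<and> (card_of X, card_of B) \<in> ordIso) \<and>
      (\<forall>X. infinite X \<and> \<not> P X \<longrightarrow> (card_of B, card_of X) \<in> ordLeq))"

end

theory Submission
  imports Defs "HOL-Algebra.Free_Abelian_Groups" (* for the cardinal arithmetic of HOL-Cardinals *)
begin

(*
  If a set of reals X fails one of the three splitting properties, then X has a countable
  omega-cover (f n) that cannot be partitioned into two large covers.  Hence for every A of
  naturals some point x of X lies in only finitely many f n with n in A, or in only finitely
  many with n outside A.  So the trace sets {n. F <= f n}, for finite F <= X, form a base of a
  nonprincipal ultrafilter, and there are only |X| of them: u <= |X|.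

  Conversely, let B be a base of a nonprincipal ultrafilter.  Identify sets of naturals with
  points of the Cantor set and let X consist of B and the co-singletons N - {n}.  The clopen
  cylinders V n = {x in X. n in x} form an omega-cover of X, because the ultrafilter has the
  finite intersection property.  If they were partitioned into two large covers, indexed by A and by
  its complement, the ultrafilter would contain one of the two index sets; some b in B would be
  almost contained in it, and then b lies in only finitely many cylinders of the other half.
  So X, which has cardinality |B|, fails all three properties.
*)

section \<open>Nonprincipal ultrafilters on the naturals\<close>

definition free_filter :: "nat set set \<Rightarrow> bool" where
  "free_filter F \<longleftrightarrow> {a. finite (- a)} \<subseteq> F \<and> {} \<notin> F \<and>
     (\<forall>a b. a \<in> F \<and> a \<subseteq> b \<longrightarrow> b \<in> F) \<and> (\<forall>a b. a \<in> F \<and> b \<in> F \<longrightarrow> a \<inter> b \<in> F)"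

lemma free_filter_cofinite: "free_filter {a. finite (- a)}"
  unfolding free_filter_def by (auto simp: Compl_Int intro: finite_subset)

lemma free_filter_Union_chain:
  assumes "C \<noteq> {}" and chain: "subset.chain {F. free_filter F} C"
  shows "free_filter (\<Union>C)"
proof -
  have filters: "\<And>F. F \<in> C \<Longrightarrow> free_filter F"
    and comparable: "\<And>F G. F \<in> C \<Longrightarrow> G \<in> C \<Longrightarrow> F \<subseteq> G \<or> G \<subseteq> F"
    using chain unfolding subset.chain_def by auto
  have "a \<inter> b \<in> \<Union>C" if "a \<in> F" "F \<in> C" "b \<in> G" "G \<in> C" for a b F G
    using comparable[of F G] filters that unfolding free_filter_def by blast
  moreover obtain F where "F \<in> C" using assms(1) by blast
  ultimately show ?thesis
    unfolding free_filter_def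
  proof (intro conjI allI impI)
    show "{a. finite (- a)} \<subseteq> \<Union>C" using filters \<open>F \<in> C\<close> unfolding free_filter_def by blast
    show "{} \<notin> \<Union>C" using filters unfolding free_filter_def by blast
    show "b \<in> \<Union>C" if "a \<in> \<Union>C \<and> a \<subseteq> b" for a b
      using that filters unfolding free_filter_def by blast
  qed blast
qed

lemma maximal_free_filter_ultra:
  assumes M: "free_filter M" and max: "\<And>F. free_filter F \<Longrightarrow> M \<subseteq> F \<Longrightarrow> F = M"
  shows "a \<in> M \<or> - a \<in> M"
proof (rule ccontr)
  assume neither: "\<not> (a \<in> M \<or> - a \<in> M)"
  define M' where "M' = {c. \<exists>m\<in>M. m \<inter> a \<subseteq> c}"
  have "M \<subseteq> M'" unfolding M'_def by blast
  moreover have "free_filter M'"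
    unfolding free_filter_def
  proof (intro conjI allI impI)
    show "{a. finite (- a)} \<subseteq> M'" using M \<open>M \<subseteq> M'\<close> unfolding free_filter_def by blast
    show "{} \<notin> M'"
    proof
      assume "{} \<in> M'"
      then obtain m where "m \<in> M" "m \<subseteq> - a" unfolding M'_def by blast
      then show False using neither M unfolding free_filter_def by blast
    qed
    show "c \<in> M'" if "b \<in> M' \<and> b \<subseteq> c" for b c using that unfolding M'_def by blast
    show "b \<inter> c \<in> M'" if bc: "b \<in> M' \<and> c \<in> M'" for b c
    proof -
      obtain m1 m2 where "m1 \<in> M" "m1 \<inter> a \<subseteq> b" "m2 \<in> M" "m2 \<inter> a \<subseteq> c"
        using bc unfolding M'_def by blast
      moreover have "m1 \<inter> m2 \<in> M" using M calculation unfolding free_filter_def by blast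
      ultimately show ?thesis unfolding M'_def by blast
    qed
  qed
  ultimately have "M' = M" by (intro max)
  moreover have "UNIV \<in> M" using M unfolding free_filter_def by auto
  then have "a \<in> M'" unfolding M'_def by blast
  ultimately show False using neither by blast
qed

lemma nonprincipal_ultrafilter_exists: "\<exists>U. nonprincipal_ultrafilter U"
proof -
  have "\<exists>M\<in>{F. free_filter F}. \<forall>F\<in>{F. free_filter F}. M \<subseteq> F \<longrightarrow> F = M"
  proof (rule subset_Zorn)
    fix C assume "subset.chain {F. free_filter F} C"
    then show "\<exists>U\<in>{F. free_filter F}. \<forall>F\<in>C. F \<subseteq> U"
      using free_filter_cofinite free_filter_Union_chain by (cases "C = {}") blast+
  qed
  then obtain M where M: "free_filter M" and max: "\<And>F. free_filter F \<Longrightarrow> M \<subseteq> F \<Longrightarrow> F = M"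
    by blast
  have "{n} \<notin> M" for n
  proof
    assume "{n} \<in> M"
    moreover have "- {n} \<in> M" using M unfolding free_filter_def by auto
    ultimately have "{n} \<inter> - {n} \<in> M" using M unfolding free_filter_def by blast
    then show False using M unfolding free_filter_def by simp
  qed
  moreover have "UNIV \<in> M" using M unfolding free_filter_def by auto
  ultimately have "nonprincipal_ultrafilter M"
    using M maximal_free_filter_ultra[OF M max] unfolding nonprincipal_ultrafilter_def free_filter_def
    by blast
  then show ?thesis ..
qed

lemma nonprincipal_ultrafilterD:
  assumes "nonprincipal_ultrafilter U"
  shows "{} \<notin> U" "UNIV \<in> U" "a \<in> U \<Longrightarrow> a \<subseteq> b \<Longrightarrow> b \<in> U" "a \<in> U \<Longrightarrow> b \<in> U \<Longrightarrow> a \<inter> b \<in> U"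
    "a \<in> U \<or> - a \<in> U" "{n} \<notin> U"
  using assms unfolding nonprincipal_ultrafilter_def by meson+

lemma nonprincipal_ultrafilter_Inter:
  assumes U: "nonprincipal_ultrafilter U" and "finite C" "C \<subseteq> U"
  shows "\<Inter>C \<in> U"
  using assms(2,3)
proof (induction C rule: finite_induct)
  case empty
  then show ?case using nonprincipal_ultrafilterD(2)[OF U] by simp
next
  case (insert c C)
  then show ?case using nonprincipal_ultrafilterD(4)[OF U, of c "\<Inter>C"] by simp
qed

lemma nonprincipal_ultrafilter_cofinite:
  assumes U: "nonprincipal_ultrafilter U" and "finite a"
  shows "- a \<in> U"
proof -
  have "- {n} \<in> U" for n
    using nonprincipal_ultrafilterD(5,6)[OF U] by blast
  then have "\<Inter>((\<lambda>n. - {n}) ` a) \<in> U"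
    using assms by (intro nonprincipal_ultrafilter_Inter) auto
  moreover have "\<Inter>((\<lambda>n. - {n}) ` a) = - a" by auto
  ultimately show ?thesis by simp
qed

lemma nonprincipal_ultrafilter_infinite:
  assumes U: "nonprincipal_ultrafilter U" and "a \<in> U"
  shows "infinite a"
proof
  assume "finite a"
  then have "a \<inter> - a \<in> U"
    using assms nonprincipal_ultrafilter_cofinite nonprincipal_ultrafilterD(4) by blast
  then show False using nonprincipal_ultrafilterD(1)[OF U] by simp
qed

definition filter_of_base :: "nat set set \<Rightarrow> nat set set" where
  "filter_of_base B = {a. \<exists>b\<in>B. finite (b - a)}"

lemma ultrafilter_base_iff:
  "ultrafilter_base B \<longleftrightarrow> (\<forall>b\<in>B. infinite b) \<and> nonprincipal_ultrafilter (filter_of_base B)"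
  unfolding ultrafilter_base_def filter_of_base_def ..

lemma base_subset_filter_of_base: "B \<subseteq> filter_of_base B"
proof
  fix b assume "b \<in> B"
  then show "b \<in> filter_of_base B"
    unfolding filter_of_base_def by (intro CollectI bexI[of _ b]) simp_all
qed

lemma nonprincipal_ultrafilter_is_base:
  assumes U: "nonprincipal_ultrafilter U"
  shows "ultrafilter_base U"
proof -
  have "a \<in> U" if "b \<in> U" "finite (b - a)" for a b
  proof -
    have "b \<inter> - (b - a) \<in> U"
      using that U nonprincipal_ultrafilter_cofinite nonprincipal_ultrafilterD(4) by blast
    then show ?thesis using nonprincipal_ultrafilterD(3)[OF U] by blast
  qed
  then have "filter_of_base U = U"
    using base_subset_filter_of_base unfolding filter_of_base_def by blast
  then show ?thesis
    using U nonprincipal_ultrafilter_infinite unfolding ultrafilter_base_iff by simp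
qed

lemma u_witness_exists: "\<exists>B. u_witness B"
proof -
  obtain U where "ultrafilter_base U"
    using nonprincipal_ultrafilter_exists nonprincipal_ultrafilter_is_base by blast
  then have "|U| \<in> {|B| | B. ultrafilter_base B}" by blast
  then obtain r where r: "r \<in> {|B| | B. ultrafilter_base B}"
    and minimal: "\<And>s. (s, r) \<in> ordLess \<Longrightarrow> s \<notin> {|B| | B. ultrafilter_base B}"
    by (rule wfE_min[OF wf_ordLess]) blast+
  then obtain B where B: "ultrafilter_base B" "r = |B|" by blast
  have "|B| \<le>o |B'|" if "ultrafilter_base B'" for B'
    using minimal[of "|B'|"] B that ordLess_or_ordLeq[OF card_of_Well_order card_of_Well_order]
    by blast
  then show ?thesis unfolding u_witness_def using B by blast
qed

lemma ultrafilter_baseI: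
  assumes infinite: "\<And>b. b \<in> B \<Longrightarrow> infinite b" and "B \<noteq> {}"
    and directed: "\<And>b c. b \<in> B \<Longrightarrow> c \<in> B \<Longrightarrow> \<exists>d\<in>B. d \<subseteq> b \<inter> c"
    and decides: "\<And>a. \<exists>b\<in>B. finite (b - a) \<or> finite (b \<inter> a)"
  shows "ultrafilter_base B"
  unfolding ultrafilter_base_iff nonprincipal_ultrafilter_def
proof (intro conjI allI impI ballI)
  show "infinite b" if "b \<in> B" for b using infinite that .
  show "{} \<notin> filter_of_base B" "{n} \<notin> filter_of_base B" for n
    using infinite unfolding filter_of_base_def by auto
  show "UNIV \<in> filter_of_base B"
  proof -
    obtain b where "b \<in> B" using \<open>B \<noteq> {}\<close> by blast
    then show ?thesis unfolding filter_of_base_def by (intro CollectI bexI[of _ b]) simp_all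
  qed
  show "c \<in> filter_of_base B" if ac: "a \<in> filter_of_base B \<and> a \<subseteq> c" for a c
  proof -
    obtain b where "b \<in> B" "finite (b - a)" using ac unfolding filter_of_base_def by blast
    moreover have "b - c \<subseteq> b - a" using ac by blast
    ultimately show ?thesis unfolding filter_of_base_def by (blast dest: finite_subset)
  qed
  show "a \<in> filter_of_base B \<or> - a \<in> filter_of_base B" for a
  proof -
    obtain b where "b \<in> B" "finite (b - a) \<or> finite (b - - a)"
      using decides[of a] by (metis Diff_Compl)
    then show ?thesis unfolding filter_of_base_def by blast
  qed
  show "a \<inter> c \<in> filter_of_base B" if ac: "a \<in> filter_of_base B \<and> c \<in> filter_of_base B" for a c
  proof -
    obtain b1 b2 where "b1 \<in> B" "finite (b1 - a)" "b2 \<in> B" "finite (b2 - c)"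
      using ac unfolding filter_of_base_def by blast
    moreover obtain d where "d \<in> B" "d \<subseteq> b1 \<inter> b2" using directed calculation by blast
    moreover have "d - (a \<inter> c) \<subseteq> (b1 - a) \<union> (b2 - c)" using calculation by blast
    ultimately have "finite (d - (a \<inter> c))" by (meson finite_UnI finite_subset)
    then show ?thesis
      using \<open>d \<in> B\<close> unfolding filter_of_base_def by blast
  qed
qed

lemma ultrafilter_base_infinite:
  assumes B: "ultrafilter_base B"
  shows "infinite B"
proof
  assume "finite B"
  have U: "nonprincipal_ultrafilter (filter_of_base B)" and infinite: "\<forall>b\<in>B. infinite b"
    using B unfolding ultrafilter_base_iff by auto
  have "\<Inter>B \<in> filter_of_base B"
    using nonprincipal_ultrafilter_Inter[OF U \<open>finite B\<close> base_subset_filter_of_base] .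
  then obtain b where "b \<in> B" "finite (b - \<Inter>B)" unfolding filter_of_base_def by blast
  then have "infinite (\<Inter>B)" using infinite by (metis finite_Diff2)
  then obtain c d where cd: "c \<subseteq> \<Inter>B" "d \<subseteq> \<Inter>B" "infinite c" "infinite d" "c \<inter> d = {}"
    by (rule infinite_split)
  from nonprincipal_ultrafilterD(5)[OF U, of c] obtain b' a where
    "b' \<in> B" "finite (b' - a)" "a = c \<or> a = - c"
    unfolding filter_of_base_def by blast
  then have "d \<subseteq> b' - a \<or> c \<subseteq> b' - a" using cd by blast
  then show False using cd \<open>finite (b' - a)\<close> by (meson finite_subset)
qed

section \<open>Omega covers and their splittings into large covers\<close>

definition large_splittable :: "real set \<Rightarrow> real set set \<Rightarrow> bool" where
  "large_splittable X \<U> \<longleftrightarrow>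
     (\<exists>\<A> \<B>. \<A> \<union> \<B> = \<U> \<and> \<A> \<inter> \<B> = {} \<and> large_cover X \<A> \<and> large_cover X \<B>)"

lemma is_coverD:
  assumes "is_cover X \<U>"
  shows "U \<in> \<U> \<Longrightarrow> U \<subseteq> X" "U \<in> \<U> \<Longrightarrow> \<not> X \<subseteq> U" "\<Union>\<U> = X"
  using assms unfolding is_cover_def by auto

lemma omega_coverD:
  assumes "omega_cover X \<U>"
  shows "is_cover X \<U>" "finite F \<Longrightarrow> F \<subseteq> X \<Longrightarrow> \<exists>U\<in>\<U>. F \<subseteq> U"
  using assms unfolding omega_cover_def by auto

lemma omega_coverI:
  assumes "\<And>U. U \<in> \<U> \<Longrightarrow> U \<subseteq> X" "\<And>U. U \<in> \<U> \<Longrightarrow> \<not> X \<subseteq> U"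
    and fin: "\<And>F. finite F \<Longrightarrow> F \<subseteq> X \<Longrightarrow> \<exists>U\<in>\<U>. F \<subseteq> U"
  shows "omega_cover X \<U>"
proof -
  have "X \<subseteq> \<Union>\<U>"
  proof
    fix x assume "x \<in> X"
    then obtain U where "U \<in> \<U>" "{x} \<subseteq> U" using fin[of "{x}"] by blast
    then show "x \<in> \<Union>\<U>" by blast
  qed
  moreover have "\<Union>\<U> \<subseteq> X" using assms(1) by blast
  ultimately have "is_cover X \<U>"
    unfolding is_cover_def using assms(1,2) by blast
  then show ?thesis unfolding omega_cover_def using fin by blast
qed

lemma omega_cover_infinite:
  assumes "omega_cover X \<U>"
  shows "infinite \<U>"
proof
  assume "finite \<U>"
  have "\<forall>U\<in>\<U>. \<exists>x. x \<in> X - U"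
    using is_coverD(2)[OF omega_coverD(1)[OF assms]] by blast
  then obtain p where p: "\<forall>U\<in>\<U>. p U \<in> X - U" by (rule bchoice[elim_format]) blast
  then have "finite (p ` \<U>)" "p ` \<U> \<subseteq> X" using \<open>finite \<U>\<close> by blast+
  then obtain U where "U \<in> \<U>" "p ` \<U> \<subseteq> U" using omega_coverD(2)[OF assms] by blast
  then show False using p by blast
qed

lemma large_cover_mono:
  assumes "large_cover X \<A>" "\<A> \<subseteq> \<B>" "\<B> \<subseteq> \<U>" "is_cover X \<U>"
  shows "large_cover X \<B>"
proof -
  have "is_cover X \<B>"
    using assms is_coverD[OF assms(4)] is_coverD(3)[of X \<A>] unfolding large_cover_def is_cover_def
    by (metis Sup_subset_mono subset_antisym subset_iff)
  moreover have "infinite {U \<in> \<B>. x \<in> U}" if "x \<in> X" for x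
  proof -
    have "{U \<in> \<A>. x \<in> U} \<subseteq> {U \<in> \<B>. x \<in> U}" using assms(2) by blast
    moreover have "infinite {U \<in> \<A>. x \<in> U}" using assms(1) that unfolding large_cover_def by blast
    ultimately show ?thesis using finite_subset by blast
  qed
  ultimately show ?thesis by (simp add: large_cover_def)
qed

lemma SplitD:
  assumes "Split \<UU> \<VV> X" "\<UU> X \<U>"
  obtains \<A> \<B> \<A>' \<B>' where "\<A> \<union> \<B> = \<U>" "\<A> \<inter> \<B> = {}"
    "\<A>' \<subseteq> \<A>" "\<VV> X \<A>'" "\<B>' \<subseteq> \<B>" "\<VV> X \<B>'"
proof -
  have "\<exists>\<A> \<B>. \<A> \<union> \<B> = \<U> \<and> \<A> \<inter> \<B> = {} \<and>
      (\<exists>\<A>'\<subseteq>\<A>. \<VV> X \<A>') \<and> (\<exists>\<B>'\<subseteq>\<B>. \<VV> X \<B>')"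
    using assms(1)[unfolded Split_def, rule_format, OF assms(2)] .
  then show thesis using that by (elim exE conjE) auto
qed

lemma not_Split_if_not_large_splittable:
  assumes "\<UU> X \<U>" "is_cover X \<U>" "\<not> large_splittable X \<U>"
    and large: "\<And>\<A>. \<VV> X \<A> \<Longrightarrow> large_cover X \<A>"
  shows "\<not> Split \<UU> \<VV> X"
proof
  assume "Split \<UU> \<VV> X"
  then obtain \<A> \<B> \<A>' \<B>' where partition: "\<A> \<union> \<B> = \<U>" "\<A> \<inter> \<B> = {}"
    and sub: "\<A>' \<subseteq> \<A>" "\<VV> X \<A>'" "\<B>' \<subseteq> \<B>" "\<VV> X \<B>'"
    using assms(1) by (rule SplitD)
  have "\<A> \<subseteq> \<U>" "\<B> \<subseteq> \<U>" using partition(1) by blast+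
  then have "large_cover X \<A>" "large_cover X \<B>"
    using large_cover_mono[OF large[OF sub(2)] sub(1) _ assms(2)]
      large_cover_mono[OF large[OF sub(4)] sub(3) _ assms(2)] by blast+
  then show False using assms(3) partition unfolding large_splittable_def by blast
qed

lemma Split_if_large_splittable:
  assumes countable_sub: "\<And>\<U>. \<UU> X \<U> \<Longrightarrow> \<exists>\<V>\<subseteq>\<U>. countable \<V> \<and> omega_cover X \<V>"
    and large_sub: "\<And>\<U> \<A>. \<UU> X \<U> \<Longrightarrow> \<A> \<subseteq> \<U> \<Longrightarrow> large_cover X \<A> \<Longrightarrow> \<VV> X \<A>"
    and splittable: "\<And>\<V>. countable \<V> \<Longrightarrow> omega_cover X \<V> \<Longrightarrow> large_splittable X \<V>"
  shows "Split \<UU> \<VV> X"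
  unfolding Split_def
proof (intro allI impI)
  fix \<U> assume "\<UU> X \<U>"
  then obtain \<V> where "\<V> \<subseteq> \<U>" "countable \<V>" "omega_cover X \<V>" using countable_sub by blast
  then have "large_splittable X \<V>" by (intro splittable)
  then obtain \<A> \<B> where partition: "\<A> \<union> \<B> = \<V>" "\<A> \<inter> \<B> = {}"
    and large: "large_cover X \<A>" "large_cover X \<B>"
    unfolding large_splittable_def by blast
  have "\<VV> X \<A>" "\<VV> X \<B>"
    using large_sub[OF \<open>\<UU> X \<U>\<close> _ large(1)] large_sub[OF \<open>\<UU> X \<U>\<close> _ large(2)]
      \<open>\<V> \<subseteq> \<U>\<close> partition(1) by blast+
  moreover have "(\<A> \<union> (\<U> - \<V>)) \<union> \<B> = \<U>" "(\<A> \<union> (\<U> - \<V>)) \<inter> \<B> = {}"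
    using \<open>\<V> \<subseteq> \<U>\<close> partition by auto
  moreover have "\<A> \<subseteq> \<A> \<union> (\<U> - \<V>)" by blast
  ultimately show "\<exists>\<A> \<B>. \<A> \<union> \<B> = \<U> \<and> \<A> \<inter> \<B> = {} \<and>
      (\<exists>\<A>'\<subseteq>\<A>. \<VV> X \<A>') \<and> (\<exists>\<B>'\<subseteq>\<B>. \<VV> X \<B>')"
    by (intro exI[of _ "\<A> \<union> (\<U> - \<V>)"] exI[of _ \<B>] conjI exI[of _ \<A>] exI[of _ \<B>] order_refl)
      simp_all
qed

lemma omega_cover_subfamily:
  assumes "omega_cover X \<U>" "\<V> \<subseteq> \<U>" and "\<And>F. finite F \<Longrightarrow> F \<subseteq> X \<Longrightarrow> \<exists>V\<in>\<V>. F \<subseteq> V"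
  shows "omega_cover X \<V>"
proof (rule omega_coverI)
  fix U assume "U \<in> \<V>"
  then have "U \<in> \<U>" using assms(2) by blast
  then show "U \<subseteq> X" "\<not> X \<subseteq> U" by (rule is_coverD[OF omega_coverD(1)[OF assms(1)]])+
qed (rule assms(3))

lemma countable_omega_subcover:
  assumes "Omega_covers X \<U>"
  shows "\<exists>\<V>\<subseteq>\<U>. countable \<V> \<and> omega_cover X \<V>"
proof -
  have omega: "omega_cover X \<U>" and opens: "\<And>U. U \<in> \<U> \<Longrightarrow> openin (top_of_set X) U"
    using assms unfolding Omega_covers_def open_fam_def by auto
  obtain \<B> :: "real set set" where "countable \<B>"
    and basis: "\<And>S. open S \<Longrightarrow> \<exists>\<C>. \<C> \<subseteq> \<B> \<and> S = \<Union>\<C>"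
    by (rule univ_second_countable) blast
  text \<open>By second countability it suffices to keep, for each finite family of basic open sets,
    one member of \<U> containing its union on X.\<close>
  define I where "I = {\<K> \<in> Fpow \<B>. \<exists>U\<in>\<U>. X \<inter> \<Union>\<K> \<subseteq> U}"
  define g where "g \<K> = (SOME U. U \<in> \<U> \<and> X \<inter> \<Union>\<K> \<subseteq> U)" for \<K>
  have g: "g \<K> \<in> \<U> \<and> X \<inter> \<Union>\<K> \<subseteq> g \<K>" if "\<K> \<in> I" for \<K>
  proof -
    have "\<exists>U. U \<in> \<U> \<and> X \<inter> \<Union>\<K> \<subseteq> U" using that unfolding I_def by blast
    then show ?thesis unfolding g_def by (rule someI_ex)
  qed
  have "countable I"
    using countable_Fpow[OF \<open>countable \<B>\<close>] unfolding I_def by (rule countable_subset[rotated]) blast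
  then have "countable (g ` I)" by blast
  moreover have "g ` I \<subseteq> \<U>" using g by blast
  moreover have fin: "\<exists>W\<in>g ` I. F \<subseteq> W" if F: "finite F" "F \<subseteq> X" for F
  proof -
    obtain U where "U \<in> \<U>" "F \<subseteq> U" using omega_coverD(2)[OF omega F] by blast
    moreover obtain T where "open T" "U = X \<inter> T"
      using opens[OF \<open>U \<in> \<U>\<close>] unfolding openin_open by blast
    ultimately have "\<forall>x\<in>F. \<exists>C. C \<in> \<B> \<and> x \<in> C \<and> C \<subseteq> T"
      using basis[OF \<open>open T\<close>] by blast
    then obtain k where k: "\<forall>x\<in>F. k x \<in> \<B> \<and> x \<in> k x \<and> k x \<subseteq> T"
      by (rule bchoice[elim_format]) blast
    then have "k ` F \<subseteq> \<B>" "X \<inter> \<Union>(k ` F) \<subseteq> U" "finite (k ` F)"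
      using \<open>U = X \<inter> T\<close> \<open>finite F\<close> by auto
    then have "k ` F \<in> I" unfolding I_def Fpow_def using \<open>U \<in> \<U>\<close> by blast
    have "F \<subseteq> X \<inter> \<Union>(k ` F)" using k \<open>F \<subseteq> X\<close> by blast
    also have "\<dots> \<subseteq> g (k ` F)" using g[OF \<open>k ` F \<in> I\<close>] by (rule conjunct2)
    finally show ?thesis using \<open>k ` F \<in> I\<close> by (intro bexI[of _ "g (k ` F)"] imageI)
  qed
  moreover have "omega_cover X (g ` I)"
    using omega_cover_subfamily[OF omega \<open>g ` I \<subseteq> \<U>\<close> fin] .
  ultimately show ?thesis by blast
qed

section \<open>Ultrafilter bases from unsplittable omega covers\<close>

lemma infinite_omega_cover_traces:
  assumes omega: "omega_cover X (range f)" and F: "finite F" "F \<subseteq> X"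
  shows "infinite {n. F \<subseteq> f n}"
proof
  assume fin: "finite {n. F \<subseteq> f n}"
  have "\<forall>n. \<exists>x. x \<in> X - f n" using is_coverD(2)[OF omega_coverD(1)[OF omega]] by blast
  then obtain p where p: "\<forall>n. p n \<in> X - f n" by (rule choice[elim_format]) blast
  text \<open>No f n containing F can also contain the witness p n.\<close>
  have "finite (F \<union> p ` {n. F \<subseteq> f n})" "F \<union> p ` {n. F \<subseteq> f n} \<subseteq> X"
    using F fin p by auto
  then obtain m where m: "F \<union> p ` {n. F \<subseteq> f n} \<subseteq> f m"
    using omega_coverD(2)[OF omega] by blast
  then have "p m \<in> f m" by blast
  then show False using p by blast
qed

lemma large_cover_image:
  assumes cover: "is_cover X (range f)" and "inj f"
    and traces: "\<And>x. x \<in> X \<Longrightarrow> infinite ({n. x \<in> f n} \<inter> S)"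
  shows "large_cover X (f ` S)"
proof -
  have large: "infinite {U \<in> f ` S. x \<in> U}" if "x \<in> X" for x
  proof -
    have "{U \<in> f ` S. x \<in> U} = f ` ({n. x \<in> f n} \<inter> S)" by blast
    moreover have "inj_on f ({n. x \<in> f n} \<inter> S)" using \<open>inj f\<close> by (rule inj_on_subset) simp
    ultimately show ?thesis using traces[OF that] by (simp add: finite_image_iff)
  qed
  have "X \<subseteq> \<Union>(f ` S)"
  proof
    fix x assume "x \<in> X"
    then have "{n. x \<in> f n} \<inter> S \<noteq> {}" by (rule infinite_imp_nonempty[OF traces])
    then show "x \<in> \<Union>(f ` S)" by blast
  qed
  moreover have "\<Union>(f ` S) \<subseteq> X" using is_coverD(1)[OF cover] by blast
  ultimately have "\<Union>(f ` S) = X" by (rule subset_antisym[rotated])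
  moreover have "\<forall>U\<in>f ` S. U \<subseteq> X \<and> \<not> X \<subseteq> U" using is_coverD(1,2)[OF cover] by blast
  ultimately have "is_cover X (f ` S)" unfolding is_cover_def by blast
  then show ?thesis using large by (simp add: large_cover_def)
qed

lemma trace_decides_if_not_large_splittable:
  assumes cover: "is_cover X (range f)" and "inj f" and "\<not> large_splittable X (range f)"
  shows "\<exists>x\<in>X. finite ({n. x \<in> f n} - A) \<or> finite ({n. x \<in> f n} \<inter> A)"
proof (rule ccontr)
  assume "\<not> ?thesis"
  then have "infinite ({n. x \<in> f n} \<inter> A)" and "infinite ({n. x \<in> f n} \<inter> - A)" if "x \<in> X" for x
    using that by (auto simp: Diff_eq)
  then have "large_cover X (f ` A)" and "large_cover X (f ` (- A))"
    using large_cover_image[OF cover \<open>inj f\<close>] by blast+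
  moreover have "f ` A \<union> f ` (- A) = range f" unfolding image_Un[symmetric] by simp
  moreover have "f ` A \<inter> f ` (- A) = {}" using image_Int[OF \<open>inj f\<close>, of A "- A"] by simp
  ultimately have "large_splittable X (range f)"
    unfolding large_splittable_def by (intro exI[of _ "f ` A"] exI[of _ "f ` (- A)"] conjI) simp_all
  with assms(3) show False by contradiction
qed

lemma ultrafilter_base_traces:
  assumes omega: "omega_cover X (range f)" and "inj f"
    and unsplittable: "\<not> large_splittable X (range f)"
  shows "ultrafilter_base ((\<lambda>F. {n. F \<subseteq> f n}) ` Fpow X)" (is "ultrafilter_base (?T ` _)")
proof (rule ultrafilter_baseI)
  show "infinite b" if "b \<in> ?T ` Fpow X" for b
    using that infinite_omega_cover_traces[OF omega] unfolding Fpow_def by blast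
  show "?T ` Fpow X \<noteq> {}" unfolding Fpow_def by blast
  show "\<exists>d\<in>?T ` Fpow X. d \<subseteq> b \<inter> c" if bc: "b \<in> ?T ` Fpow X" "c \<in> ?T ` Fpow X" for b c
  proof -
    obtain F G where "F \<in> Fpow X" "G \<in> Fpow X" "b = ?T F" "c = ?T G" using bc by blast
    moreover have "F \<union> G \<in> Fpow X" using calculation unfolding Fpow_def by blast
    moreover have "?T (F \<union> G) = b \<inter> c" using calculation by auto
    ultimately show ?thesis by (metis image_eqI order_refl)
  qed
  show "\<exists>b\<in>?T ` Fpow X. finite (b - a) \<or> finite (b \<inter> a)" for a
  proof -
    obtain x where "x \<in> X" "finite ({n. x \<in> f n} - a) \<or> finite ({n. x \<in> f n} \<inter> a)"
      using trace_decides_if_not_large_splittable[OF omega_coverD(1)[OF omega] \<open>inj f\<close> unsplittable]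
      by blast
    moreover have "{x} \<in> Fpow X" "?T {x} = {n. x \<in> f n}" using \<open>x \<in> X\<close> unfolding Fpow_def by auto
    ultimately show ?thesis by (metis image_eqI)
  qed
qed

lemma u_le_card_if_not_large_splittable:
  assumes "u_witness B" "infinite X"
    and "countable \<V>" "omega_cover X \<V>" "\<not> large_splittable X \<V>"
  shows "|B| \<le>o |X|"
proof -
  obtain e where "bij_betw e \<V> (UNIV :: nat set)"
    using countableE_infinite[OF assms(3) omega_cover_infinite[OF assms(4)]] by blast
  then have "bij_betw (inv_into \<V> e) UNIV \<V>" by (rule bij_betw_inv_into)
  then obtain f :: "nat \<Rightarrow> real set" where "inj f" "range f = \<V>" unfolding bij_betw_def by blast
  then have "ultrafilter_base ((\<lambda>F. {n. F \<subseteq> f n}) ` Fpow X)"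
    using ultrafilter_base_traces assms(4,5) by blast
  then have "|B| \<le>o |(\<lambda>F. {n. F \<subseteq> f n}) ` Fpow X|" using assms(1) unfolding u_witness_def by blast
  moreover have "|(\<lambda>F. {n. F \<subseteq> f n}) ` Fpow X| \<le>o |Fpow X|" by (rule card_of_image)
  moreover have "|Fpow X| =o |X|" using assms(2) by (rule card_of_Fpow_infinite)
  ultimately show ?thesis using ordLeq_transitive ordLeq_ordIso_trans by blast
qed

section \<open>Cylinders in the Cantor set\<close>

definition cantor_digit :: "nat set \<Rightarrow> nat \<Rightarrow> real" where
  "cantor_digit x j = (if j \<in> x then (2/3) * (1/3)^j else 0)"

definition cantor_point :: "nat set \<Rightarrow> real" where
  "cantor_point x = suminf (cantor_digit x)"

lemma summable_cantor_weights: "summable (\<lambda>j. (2/3) * (1/3::real)^j)"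
  by (intro summable_mult summable_geometric) simp

lemma suminf_cantor_weights_shift: "suminf (\<lambda>j. (2/3) * (1/3::real)^(j + m)) = (1/3)^m"
proof -
  have "(\<lambda>j. (2/3) * (1/3::real)^(j + m)) = (\<lambda>j. ((2/3) * (1/3)^m) * (1/3)^j)"
    by (simp add: power_add algebra_simps)
  moreover have "suminf (\<lambda>j. ((2/3) * (1/3::real)^m) * (1/3)^j) = ((2/3) * (1/3)^m) * suminf (\<lambda>j. (1/3::real)^j)"
    by (rule suminf_mult) (rule summable_geometric, simp)
  moreover have "suminf (\<lambda>j. (1/3::real)^j) = 3/2" by (subst suminf_geometric) simp_all
  ultimately show ?thesis by simp
qed

lemma cantor_bounded_series:
  fixes D :: "nat \<Rightarrow> real"
  assumes b: "\<And>j. \<bar>D j\<bar> \<le> (2/3) * (1/3)^j"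
  shows "summable D" "\<bar>suminf (\<lambda>j. D (j + m))\<bar> \<le> (1/3)^m"
proof -
  show sD: "summable D"
    by (rule summable_rabs_cancel, rule summable_comparison_test[OF _ summable_cantor_weights]) (use b in auto)
  have sg: "summable (\<lambda>j. (2/3) * (1/3::real)^(j + m))"
    using summable_ignore_initial_segment[OF summable_cantor_weights, of m] by simp
  have sDm: "summable (\<lambda>j. D (j + m))" using summable_ignore_initial_segment[OF sD] .
  have "suminf (\<lambda>j. D (j + m)) \<le> suminf (\<lambda>j. (2/3) * (1/3::real)^(j + m))"
    by (rule suminf_le[OF _ sDm sg]) (rule abs_le_D1[OF b])
  moreover have "suminf (\<lambda>j. - ((2/3) * (1/3::real)^(j + m))) \<le> suminf (\<lambda>j. D (j + m))"
  proof (rule suminf_le[OF _ summable_minus[OF sg] sDm])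
    fix n show "- ((2/3) * (1/3::real)^(n + m)) \<le> D (n + m)" using abs_le_D2[OF b, of "n+m"] by linarith
  qed
  moreover have "suminf (\<lambda>j. - ((2/3) * (1/3::real)^(j + m))) = - suminf (\<lambda>j. (2/3) * (1/3::real)^(j + m))"
    by (rule suminf_minus[OF sg])
  ultimately show "\<bar>suminf (\<lambda>j. D (j + m))\<bar> \<le> (1/3)^m" using suminf_cantor_weights_shift[of m] by linarith
qed

lemma summable_cantor_digit: "summable (cantor_digit x)"
  by (rule cantor_bounded_series(1)) (simp add: cantor_digit_def)

lemma dist_cantor_point_ge:
  assumes "(n \<in> x) \<noteq> (n \<in> y)"
  shows "(1/3::real)^Suc n \<le> dist (cantor_point x) (cantor_point y)"
proof -
  define D where "D j = cantor_digit x j - cantor_digit y j" for j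
  have D_bound: "\<bar>D j\<bar> \<le> (2/3) * (1/3)^j" for j unfolding D_def cantor_digit_def by auto
  have "cantor_point x - cantor_point y = suminf D"
    unfolding cantor_point_def D_def using suminf_diff[OF summable_cantor_digit summable_cantor_digit]
    by simp
  define k where "k = (LEAST j. (j \<in> x) \<noteq> (j \<in> y))"
  have "k \<le> n" unfolding k_def by (rule Least_le) (rule assms)
  have "(k \<in> x) \<noteq> (k \<in> y)" unfolding k_def by (rule LeastI) (rule assms)
  then have D_k: "\<bar>D k\<bar> = 2 * (1/3)^Suc k" unfolding D_def cantor_digit_def by auto
  have "D j = 0" if "j < k" for j
  proof -
    have "(j \<in> x) = (j \<in> y)" using not_less_Least[OF that[unfolded k_def]] by blast
    then show ?thesis unfolding D_def cantor_digit_def by simp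
  qed
  then have "suminf D = suminf (\<lambda>j. D (j + Suc k)) + D k"
    using suminf_split_initial_segment[OF cantor_bounded_series(1)[OF D_bound], of "Suc k"] by simp
  text \<open>The first differing digit outweighs all later ones together.\<close>
  moreover have "\<bar>suminf (\<lambda>j. D (j + Suc k))\<bar> \<le> (1/3)^Suc k"
    by (rule cantor_bounded_series(2)[OF D_bound])
  ultimately have "(1/3::real)^Suc k \<le> \<bar>suminf D\<bar>" using D_k by linarith
  moreover have "(1/3::real)^Suc n \<le> (1/3)^Suc k" by (rule power_decreasing) (use \<open>k \<le> n\<close> in auto)
  ultimately have "(1/3::real)^Suc n \<le> \<bar>suminf D\<bar>" by (rule order_trans[rotated])
  then show ?thesis
    using \<open>cantor_point x - cantor_point y = suminf D\<close> by (simp only: dist_real_def)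
qed

lemma inj_cantor_point: "inj cantor_point"
proof (rule injI)
  fix x y assume e: "cantor_point x = cantor_point y"
  show "x = y"
  proof (rule ccontr)
    assume "x \<noteq> y"
    then obtain n where "(n \<in> x) \<noteq> (n \<in> y)" by blast
    then have "(1/3::real)^Suc n \<le> dist (cantor_point x) (cantor_point y)" by (rule dist_cantor_point_ge)
    moreover have "(0::real) < (1/3)^Suc n" by (rule zero_less_power) simp
    ultimately have "0 < dist (cantor_point x) (cantor_point y)" by linarith
    then show False using e by simp
  qed
qed

definition cylinder :: "nat set set \<Rightarrow> nat \<Rightarrow> real set" where
  "cylinder S n = cantor_point ` {x \<in> S. n \<in> x}"

lemma cantor_point_in_cylinder_iff:
  "x \<in> S \<Longrightarrow> cantor_point x \<in> cylinder S n \<longleftrightarrow> n \<in> x"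
  unfolding cylinder_def using inj_image_mem_iff[OF inj_cantor_point] by blast

lemma openin_cantor_coordinate:
  "openin (top_of_set (cantor_point ` S)) (cantor_point ` {x \<in> S. (n \<in> x) = t})"
  unfolding openin_euclidean_subtopology_iff
proof (intro conjI ballI)
  show "cantor_point ` {x \<in> S. (n \<in> x) = t} \<subseteq> cantor_point ` S" by blast
  fix p assume "p \<in> cantor_point ` {x \<in> S. (n \<in> x) = t}"
  then obtain x where x: "x \<in> S" "(n \<in> x) = t" "p = cantor_point x" by blast
  show "\<exists>e>0. \<forall>q\<in>cantor_point ` S. dist q p < e \<longrightarrow> q \<in> cantor_point ` {x \<in> S. (n \<in> x) = t}"
  proof (intro exI[of _ "(1/3::real)^Suc n"] conjI ballI impI)
    show "(0::real) < (1/3)^Suc n" by simp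
    fix q assume q: "q \<in> cantor_point ` S" "dist q p < (1/3)^Suc n"
    then obtain y where y: "y \<in> S" "q = cantor_point y" by blast
    have "(n \<in> y) = (n \<in> x)"
      using dist_cantor_point_ge[of n y x] q(2) x(3) y(2) by (meson not_le)
    then show "q \<in> cantor_point ` {x \<in> S. (n \<in> x) = t}" using x(2) y by blast
  qed
qed

lemma clopen_cylinder:
  "openin (top_of_set (cantor_point ` S)) (cylinder S n)"
  "closedin (top_of_set (cantor_point ` S)) (cylinder S n)"
proof -
  show "openin (top_of_set (cantor_point ` S)) (cylinder S n)"
    unfolding cylinder_def using openin_cantor_coordinate[of S n True] by simp
  have "cantor_point ` S - cylinder S n = cantor_point ` {x \<in> S. (n \<in> x) = False}"
    using cantor_point_in_cylinder_iff by auto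
  moreover have "cylinder S n \<subseteq> cantor_point ` S" unfolding cylinder_def by blast
  ultimately show "closedin (top_of_set (cantor_point ` S)) (cylinder S n)"
    unfolding closedin_def using openin_cantor_coordinate[of S n False] by simp
qed

lemma omega_cover_cylinders:
  assumes fip: "\<And>C. finite C \<Longrightarrow> C \<subseteq> S \<Longrightarrow> \<Inter>C \<noteq> {}" and avoid: "\<And>n. \<exists>x\<in>S. n \<notin> x"
  shows "omega_cover (cantor_point ` S) (range (cylinder S))"
proof (rule omega_coverI)
  fix U assume "U \<in> range (cylinder S)"
  then obtain n where "U = cylinder S n" by blast
  moreover obtain x where "x \<in> S" "n \<notin> x" using avoid by blast
  ultimately show "U \<subseteq> cantor_point ` S" "\<not> cantor_point ` S \<subseteq> U"
    using cantor_point_in_cylinder_iff unfolding cylinder_def by blast+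
next
  fix F assume "finite F" "F \<subseteq> cantor_point ` S"
  then obtain C where "C \<subseteq> S" "finite C" "F = cantor_point ` C"
    by (meson finite_subset_image)
  moreover obtain n where "n \<in> \<Inter>C" using fip calculation by blast
  ultimately have "F \<subseteq> cylinder S n" unfolding cylinder_def by blast
  then show "\<exists>U\<in>range (cylinder S). F \<subseteq> U" by blast
qed

lemma not_large_splittable_cylinders:
  assumes decides: "\<And>A. \<exists>x\<in>S. finite (x - A) \<or> finite (x \<inter> A)"
  shows "\<not> large_splittable (cantor_point ` S) (range (cylinder S))"
proof
  assume "large_splittable (cantor_point ` S) (range (cylinder S))"
  then obtain \<A> \<B> where partition: "\<A> \<union> \<B> = range (cylinder S)" "\<A> \<inter> \<B> = {}"
    and large: "large_cover (cantor_point ` S) \<A>" "large_cover (cantor_point ` S) \<B>"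
    unfolding large_splittable_def by blast
  have few: "finite {U \<in> \<C>. cantor_point x \<in> U}"
    if "\<C> \<subseteq> range (cylinder S)" "x \<in> S" "finite (x \<inter> {m. cylinder S m \<in> \<C>})" for \<C> x
  proof -
    have "{U \<in> \<C>. cantor_point x \<in> U} \<subseteq> cylinder S ` (x \<inter> {m. cylinder S m \<in> \<C>})"
      using that(1,2) cantor_point_in_cylinder_iff by blast
    then show ?thesis using that(3) by (meson finite_imageI finite_subset)
  qed
  define A where "A = {m. cylinder S m \<in> \<A>}"
  obtain x where x: "x \<in> S" "finite (x - A) \<or> finite (x \<inter> A)" using decides by blast
  then have "finite (x \<inter> {m. cylinder S m \<in> \<B>}) \<or> finite (x \<inter> {m. cylinder S m \<in> \<A>})"
    using partition(2) unfolding A_def by (auto elim: finite_subset[rotated])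
  then have "finite {U \<in> \<B>. cantor_point x \<in> U} \<or> finite {U \<in> \<A>. cantor_point x \<in> U}"
    using few[of \<B> x] few[of \<A> x] partition(1) x(1) by blast
  then show False using large x(1) unfolding large_cover_def by blast
qed

lemma ultrafilter_base_cantor_counterexample:
  assumes B: "ultrafilter_base B"
  obtains X \<U> where "infinite X" "|X| =o |B|" "C_Omega X \<U>" "\<not> large_splittable X \<U>"
proof -
  text \<open>The co-singletons keep every cylinder a proper subset of the space.\<close>
  define S where "S = B \<union> range (\<lambda>n. - {n})"
  have U: "nonprincipal_ultrafilter (filter_of_base B)" using B unfolding ultrafilter_base_iff by blast
  have "- {n} \<in> filter_of_base B" for n
    using nonprincipal_ultrafilter_cofinite[OF U] by blast
  then have "S \<subseteq> filter_of_base B" unfolding S_def using base_subset_filter_of_base by blast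
  then have fip: "\<Inter>C \<noteq> {}" if "finite C" "C \<subseteq> S" for C
    using nonprincipal_ultrafilter_Inter[OF U that(1)] nonprincipal_ultrafilterD(1)[OF U] that(2)
    by fastforce
  have avoid: "\<exists>x\<in>S. n \<notin> x" for n unfolding S_def by blast
  have decides: "\<exists>x\<in>S. finite (x - a) \<or> finite (x \<inter> a)" for a
  proof -
    from nonprincipal_ultrafilterD(5)[OF U, of a]
    obtain b where "b \<in> B" "finite (b - a) \<or> finite (b - - a)" unfolding filter_of_base_def by blast
    then show ?thesis unfolding S_def by (metis Diff_Compl UnI1)
  qed
  have "C_Omega (cantor_point ` S) (range (cylinder S))"
    unfolding C_Omega_def clopen_fam_def using omega_cover_cylinders[OF fip avoid] clopen_cylinder
    by blast
  moreover have "infinite B" using B by (rule ultrafilter_base_infinite)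
  then have "|S| =o |B|"
    unfolding S_def by (metis card_of_Un_infinite ordLeq_transitive card_of_image infinite_iff_card_of_nat)
  then have "|cantor_point ` S| =o |B|"
    using card_of_ordIso inj_on_imp_bij_betw[OF inj_on_subset[OF inj_cantor_point subset_UNIV]]
      ordIso_symmetric ordIso_transitive by metis
  moreover have "infinite (cantor_point ` S)"
    using \<open>infinite B\<close> finite_imageD inj_on_subset[OF inj_cantor_point subset_UNIV]
    unfolding S_def by blast
  ultimately show thesis using that not_large_splittable_cylinders[OF decides] by blast
qed

section \<open>Critical cardinalities of the splitting properties\<close>

lemma openin_in_sets_restrict_borel:
  assumes "openin (top_of_set X) U"
  shows "U \<in> sets (restrict_space borel X)"
proof -
  obtain T where "open T" "U = X \<inter> T" using assms unfolding openin_open by blast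
  then show ?thesis unfolding sets_restrict_space by auto
qed

lemma critical_card_Split_is_u:
  assumes countable_sub: "\<And>X \<U>. \<UU> X \<U> \<Longrightarrow> \<exists>\<V>\<subseteq>\<U>. countable \<V> \<and> omega_cover X \<V>"
    and large_sub: "\<And>X \<U> \<A>. \<UU> X \<U> \<Longrightarrow> \<A> \<subseteq> \<U> \<Longrightarrow> large_cover X \<A> \<Longrightarrow> \<VV> X \<A>"
    and large: "\<And>X \<A>. \<VV> X \<A> \<Longrightarrow> large_cover X \<A>"
    and clopen: "\<And>X \<U>. C_Omega X \<U> \<Longrightarrow> \<UU> X \<U>"
  shows "critical_card_is_u (Split \<UU> \<VV>)"
proof -
  obtain B where B: "u_witness B" using u_witness_exists by blast
  then obtain X \<U> where X: "infinite X" "|X| =o |B|"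
    and \<U>: "C_Omega X \<U>" "\<not> large_splittable X \<U>"
    using ultrafilter_base_cantor_counterexample unfolding u_witness_def by blast
  have "is_cover X \<U>" using \<U>(1) unfolding C_Omega_def omega_cover_def by blast
  then have "\<not> Split \<UU> \<VV> X"
    using not_Split_if_not_large_splittable[of \<UU> X \<U> \<VV>] clopen[OF \<U>(1)] \<U>(2) large
    by blast
  moreover have "|B| \<le>o |Y|" if Y: "infinite Y" "\<not> Split \<UU> \<VV> Y" for Y
  proof -
    have "\<exists>\<V>. countable \<V> \<and> omega_cover Y \<V> \<and> \<not> large_splittable Y \<V>"
    proof (rule ccontr)
      assume "\<nexists>\<V>. countable \<V> \<and> omega_cover Y \<V> \<and> \<not> large_splittable Y \<V>"
      then have "Split \<UU> \<VV> Y"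
        using countable_sub large_sub by (intro Split_if_large_splittable) blast+
      with Y(2) show False ..
    qed
    then obtain \<V> where "countable \<V>" "omega_cover Y \<V>" "\<not> large_splittable Y \<V>" by blast
    then show ?thesis by (rule u_le_card_if_not_large_splittable[OF B Y(1)])
  qed
  ultimately show ?thesis unfolding critical_card_is_u_def using B X by blast
qed

theorem theorem5p3:
  shows "critical_card_is_u (Split B_Omega B_Lambda)
       \<and> critical_card_is_u (Split Omega_covers Lambda_covers)
       \<and> critical_card_is_u (Split C_Omega C_Lambda)"
proof (intro conjI critical_card_Split_is_u)
  show "\<exists>\<V>\<subseteq>\<U>. countable \<V> \<and> omega_cover X \<V>" if "Omega_covers X \<U>" for X \<U>
    using that by (rule countable_omega_subcover)
qed (auto simp: B_Omega_def B_Lambda_def Lambda_covers_def Omega_covers_def C_Omega_def C_Lambda_def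
    borel_fam_def clopen_fam_def open_fam_def
    intro: countable_subset openin_in_sets_restrict_borel)

end
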